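(* Let $W\in\mathbb{R}^{k\times k}$ and $\alpha\in(0,\gamma_2(W))$. There is $\ell\in\mathbb{N}$ with $\ell\lesssim\frac{\gamma_2(W)^2\log k}{\alpha^2}$ such that $\gamma_2^\ell(W;\alpha)\lesssim\gamma_2(W)$ (where $\lesssim$ means up to a universal constant factor).
   Context: $\|A\|_{1\to2}$ is the maximum Euclidean column norm, $\|A\|_\infty$ the maximum absolute entry. $\gamma_2(W)=\min_{L^TR=W}\|L\|_{1\to2}\|R\|_{1\to2}$ over matrices $L,R$ with any number of rows; $\gamma_2^\ell(W)$ is the same minimum restricted to $L,R\in\mathbb{R}^{\ell\times k}$; $\gamma_2^\ell(W;\alpha)=\min_{\|\tilde W-W\|_\infty\le\alpha}\gamma_2^\ell(\tilde W)$. *)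

theory Defs
  imports "HOL-Analysis.Analysis"
begin

text \<open>Matrices are functions nat => nat => real; only entries inside the stated
  dimensions are read. An m x k matrix L has entries L i j for i < m, j < k.\<close>

definition col_norm :: "nat \<Rightarrow> nat \<Rightarrow> (nat \<Rightarrow> nat \<Rightarrow> real) \<Rightarrow> real" where
  "col_norm m k L = Max ((\<lambda>j. sqrt (\<Sum>i<m. (L i j)\<^sup>2)) ` {..<k})"

definition factors :: "nat \<Rightarrow> nat \<Rightarrow> (nat \<Rightarrow> nat \<Rightarrow> real) \<Rightarrow> (nat \<Rightarrow> nat \<Rightarrow> real)
    \<Rightarrow> (nat \<Rightarrow> nat \<Rightarrow> real) \<Rightarrow> bool" where
  "factors m k L R W \<longleftrightarrow> (\<forall>j<k. \<forall>j'<k. (\<Sum>i<m. L i j * R i j') = W j j')"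

definition gamma2 :: "nat \<Rightarrow> (nat \<Rightarrow> nat \<Rightarrow> real) \<Rightarrow> real" where
  "gamma2 k W = Inf {col_norm m k L * col_norm m k R | m L R. factors m k L R W}"

text \<open>gamma_2^l(W): minimum over l x k factorizations (infinity if none exist).\<close>
definition gamma2_dim :: "nat \<Rightarrow> nat \<Rightarrow> (nat \<Rightarrow> nat \<Rightarrow> real) \<Rightarrow> ereal" where
  "gamma2_dim l k W = Inf {ereal (col_norm l k L * col_norm l k R) | L R. factors l k L R W}"

definition gamma2_dim_approx :: "nat \<Rightarrow> nat \<Rightarrow> (nat \<Rightarrow> nat \<Rightarrow> real) \<Rightarrow> real \<Rightarrow> ereal" where
  "gamma2_dim_approx l k W \<alpha> =
     Inf {gamma2_dim l k W' | W'. \<forall>i<k. \<forall>j<k. \<bar>W' i j - W i j\<bar> \<le> \<alpha>}"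

end

theory Submission
  imports Defs "HOL-Probability.Hoeffding"
begin

text \<open>Take a factorization \<open>W = L\<^sup>T R\<close> of cost below \<open>2 \<gamma>\<^sub>2(W)\<close> and rescale it so that
  all columns \<open>x\<^sub>j\<close> of \<open>L\<close> and \<open>y\<^sub>j\<close> of \<open>R\<close> have squared length at most \<open>2 \<gamma>\<^sub>2(W)\<close>.
  Sketch both factors with a random \<open>l \<times> m\<close> sign matrix \<open>G\<close>, scaled by \<open>1 / \<surd>l\<close>.
  The moment bound \<open>E exp (t \<langle>e, z\<rangle>\<^sup>2) \<le> exp (t |z|\<^sup>2 + 4 t\<^sup>2 |z|\<^sup>4)\<close> for random signs \<open>e\<close>
  and a union bound over the \<open>2k + 2k\<^sup>2\<close> vectors \<open>x\<^sub>j\<close>, \<open>y\<^sub>j\<close>, \<open>x\<^sub>j \<plusminus> y\<^sub>j\<^sub>'\<close> show that for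
  \<open>l \<approx> \<gamma>\<^sub>2(W)\<^sup>2 log k / \<alpha>\<^sup>2\<close> some \<open>G\<close> distorts all their squared lengths by less than \<open>2\<alpha>\<close>.
  By polarization the sketched inner products then approximate \<open>W j j' = \<langle>x\<^sub>j, y\<^sub>j\<^sub>'\<rangle>\<close> up to \<open>\<alpha>\<close>,
  while the sketched columns have squared length below \<open>2 \<gamma>\<^sub>2(W) + 2\<alpha> < 4 \<gamma>\<^sub>2(W)\<close>.\<close>

section \<open>Exponential moments of random sign sums\<close>

lemma cosh_le_exp_square_half: "cosh x \<le> exp (x\<^sup>2 / 2)" for x :: real
proof -
  have nonneg: "cosh x \<le> exp (x\<^sup>2 / 2)" if "x \<ge> 0" for x :: real
  proof -
    \<comment> \<open>Hoeffding's lemma for a fair coin with values \<open>0\<close> and \<open>2x\<close>\<close>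
    have "-(2*x) * (1/2) + ln (1 + (1/2) * (exp (2*x) - 1)) \<le> (2*x)\<^sup>2 / 8"
      using Hoeffdings_lemma_aux[of "2*x" "1/2"] that by simp
    then have "ln ((1 + exp (2*x)) / 2) \<le> x + x\<^sup>2 / 2"
      by (simp add: power2_eq_square field_simps)
    then have "(1 + exp (2*x)) / 2 \<le> exp (x + x\<^sup>2 / 2)"
      by (smt (verit) exp_gt_zero exp_le_cancel_iff exp_ln)
    then have "exp (-x) * ((1 + exp (2*x)) / 2) \<le> exp (-x) * exp (x + x\<^sup>2 / 2)"
      by simp
    then show ?thesis
      by (simp add: cosh_field_def field_simps flip: exp_add)
  qed
  show ?thesis
    using nonneg[of x] nonneg[of "-x"] by (cases "x \<ge> 0") auto
qed

lemma exp_square_shift_avg_le: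
  fixes t Y a :: real
  shows "(exp (t * (Y + a)\<^sup>2) + exp (t * (Y - a)\<^sup>2)) / 2
           \<le> exp (t * a\<^sup>2) * exp ((t + 2 * a\<^sup>2 * t\<^sup>2) * Y\<^sup>2)"
proof -
  have "(exp (t * (Y + a)\<^sup>2) + exp (t * (Y - a)\<^sup>2)) / 2
      = exp (t * Y\<^sup>2 + t * a\<^sup>2) * cosh (2 * t * a * Y)"
    by (simp add: cosh_field_def power2_eq_square field_simps flip: exp_add)
  also have "\<dots> \<le> exp (t * Y\<^sup>2 + t * a\<^sup>2) * exp ((2 * t * a * Y)\<^sup>2 / 2)"
    by (intro mult_left_mono cosh_le_exp_square_half) auto
  also have "\<dots> = exp (t * a\<^sup>2) * exp ((t + 2 * a\<^sup>2 * t\<^sup>2) * Y\<^sup>2)"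
    by (simp add: power2_eq_square algebra_simps flip: exp_add)
  finally show ?thesis .
qed

text \<open>In the induction of \<open>sign_avg_exp_square_dot_le\<close>, a new coordinate \<open>a\<close> with \<open>p = a\<^sup>2\<close>
  changes the parameter \<open>t\<close> into \<open>t + 2 p t\<^sup>2\<close> (by \<open>exp_square_shift_avg_le\<close>); these are the
  two inequalities that keep the induction going.\<close>

lemma
  fixes t p s :: real
  assumes s: "0 \<le> s" and p: "0 \<le> p" and small: "\<bar>t\<bar> * (s + p) \<le> 1/4"
  shows mgf_param_step_small: "\<bar>t + 2 * p * t\<^sup>2\<bar> * s \<le> 1/4"
    and mgf_exponent_step_le:
      "t * p + (t + 2 * p * t\<^sup>2) * s + 4 * (t + 2 * p * t\<^sup>2)\<^sup>2 * s\<^sup>2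
         \<le> t * (s + p) + 4 * t\<^sup>2 * (s + p)\<^sup>2"
proof -
  have "0 \<le> \<bar>t\<bar> * p" "\<bar>t\<bar> * s + \<bar>t\<bar> * p \<le> 1/4"
    using p small by (simp_all add: distrib_left)
  then have ts: "\<bar>t\<bar> * s \<le> 1/4"
    by linarith
  have "\<bar>t + 2 * p * t\<^sup>2\<bar> * s \<le> (\<bar>t\<bar> + 2 * p * t\<^sup>2) * s"
  proof (rule mult_right_mono[OF _ s])
    show "\<bar>t + 2 * p * t\<^sup>2\<bar> \<le> \<bar>t\<bar> + 2 * p * t\<^sup>2"
      using abs_triangle_ineq[of t "2 * p * t\<^sup>2"] p by simp
  qed
  also have "\<dots> = \<bar>t\<bar> * s + (\<bar>t\<bar> * p) * (2 * \<bar>t\<bar> * s)"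
    by (simp add: power2_eq_square algebra_simps)
  also have "\<dots> \<le> \<bar>t\<bar> * s + (\<bar>t\<bar> * p) * 1"
    using ts p by (intro add_left_mono mult_left_mono) auto
  finally show "\<bar>t + 2 * p * t\<^sup>2\<bar> * s \<le> 1/4"
    using small by (simp add: distrib_left)
  have "16 * p * t^3 * s\<^sup>2 = (4 * p * t\<^sup>2 * s) * (4 * t * s)"
    by (simp add: power2_eq_square power3_eq_cube)
  also have "\<dots> \<le> (4 * p * t\<^sup>2 * s) * 1"
    using ts mult_right_mono[OF abs_ge_self[of t] s] s p by (intro mult_left_mono) auto
  finally have cubic: "16 * p * t^3 * s\<^sup>2 \<le> 4 * p * t\<^sup>2 * s"
    by simp
  have "(4 * \<bar>t\<bar> * s)\<^sup>2 \<le> 1\<^sup>2"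
    using ts s by (intro power_mono) auto
  then have "(p\<^sup>2 * t\<^sup>2) * (4 * t * s)\<^sup>2 \<le> (p\<^sup>2 * t\<^sup>2) * 1"
    by (intro mult_left_mono) (auto simp: power_mult_distrib)
  then have quartic: "16 * p\<^sup>2 * t^4 * s\<^sup>2 \<le> p\<^sup>2 * t\<^sup>2"
    by (simp add: power2_eq_square power4_eq_xxxx algebra_simps)
  have "t * (s + p) + 4 * t\<^sup>2 * (s + p)\<^sup>2
      - (t * p + (t + 2 * p * t\<^sup>2) * s + 4 * (t + 2 * p * t\<^sup>2)\<^sup>2 * s\<^sup>2)
      = 6 * p * t\<^sup>2 * s + 4 * p\<^sup>2 * t\<^sup>2 - 16 * p * t^3 * s\<^sup>2 - 16 * p\<^sup>2 * t^4 * s\<^sup>2"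
    by (simp add: power2_eq_square power3_eq_cube power4_eq_xxxx algebra_simps)
  moreover have "0 \<le> p * t\<^sup>2 * s" "0 \<le> p\<^sup>2 * t\<^sup>2"
    using p s by auto
  ultimately show "t * p + (t + 2 * p * t\<^sup>2) * s + 4 * (t + 2 * p * t\<^sup>2)\<^sup>2 * s\<^sup>2
         \<le> t * (s + p) + 4 * t\<^sup>2 * (s + p)\<^sup>2"
    using cubic quartic by linarith
qed

text \<open>\<open>sign_avg m f\<close> is the expectation of \<open>f e\<close> for a uniformly random sign vector \<open>e\<close>:
  the \<open>e i\<close> for \<open>i < m\<close> are independent and uniform on \<open>{1, -1}\<close>, and \<open>e i = 0\<close> for \<open>i \<ge> m\<close>.
  \<open>sign_matrix_avg m l f\<close> is the expectation over random \<open>l \<times> m\<close> sign matrices, given as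
  sequences of rows.\<close>

primrec sign_avg :: "nat \<Rightarrow> ((nat \<Rightarrow> real) \<Rightarrow> real) \<Rightarrow> real" where
  "sign_avg 0 f = f (\<lambda>_. 0)"
| "sign_avg (Suc m) f = (sign_avg m (\<lambda>e. f (e(m := 1))) + sign_avg m (\<lambda>e. f (e(m := -1)))) / 2"

primrec sign_matrix_avg :: "nat \<Rightarrow> nat \<Rightarrow> ((nat \<Rightarrow> nat \<Rightarrow> real) \<Rightarrow> real) \<Rightarrow> real" where
  "sign_matrix_avg m 0 f = f (\<lambda>_ _. 0)"
| "sign_matrix_avg m (Suc l) f = sign_avg m (\<lambda>e. sign_matrix_avg m l (\<lambda>G. f (G(l := e))))"

lemma sign_avg_add: "sign_avg m (\<lambda>e. f e + g e) = sign_avg m f + sign_avg m g"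
  by (induction m arbitrary: f g) (simp_all add: field_simps)

lemma sign_avg_cmult: "sign_avg m (\<lambda>e. c * f e) = c * sign_avg m f"
  by (induction m arbitrary: f) (simp_all add: field_simps)

lemma sign_avg_const: "sign_avg m (\<lambda>_. c) = c"
  by (induction m) simp_all

lemma sign_avg_mono: "(\<And>e. f e \<le> g e) \<Longrightarrow> sign_avg m f \<le> sign_avg m g"
proof (induction m arbitrary: f g)
  case 0
  then show ?case by simp
next
  case (Suc m)
  have "sign_avg m (\<lambda>e. f (e(m := s))) \<le> sign_avg m (\<lambda>e. g (e(m := s)))" for s
    by (rule Suc.IH) (rule Suc.prems)
  from this[of 1] this[of "-1"] show ?case by simp
qed

lemma sign_avg_nonneg: "(\<And>e. 0 \<le> f e) \<Longrightarrow> 0 \<le> sign_avg m f"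
  using sign_avg_mono[of "\<lambda>_. 0" f m] by (simp add: sign_avg_const)

lemma sign_matrix_avg_add:
  "sign_matrix_avg m l (\<lambda>G. f G + g G) = sign_matrix_avg m l f + sign_matrix_avg m l g"
  by (induction l arbitrary: f g) (simp_all add: sign_avg_add)

lemma sign_matrix_avg_cmult: "sign_matrix_avg m l (\<lambda>G. c * f G) = c * sign_matrix_avg m l f"
  by (induction l arbitrary: f) (simp_all add: sign_avg_cmult)

lemma sign_matrix_avg_const: "sign_matrix_avg m l (\<lambda>_. c) = c"
  by (induction l) (simp_all add: sign_avg_const)

lemma sign_matrix_avg_mono:
  "(\<And>G. f G \<le> g G) \<Longrightarrow> sign_matrix_avg m l f \<le> sign_matrix_avg m l g"
  by (induction l arbitrary: f g) (simp_all add: sign_avg_mono)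

lemma sign_matrix_avg_sum:
  "finite Q \<Longrightarrow> sign_matrix_avg m l (\<lambda>G. \<Sum>q\<in>Q. f q G) = (\<Sum>q\<in>Q. sign_matrix_avg m l (f q))"
  by (induction Q rule: finite_induct) (simp_all add: sign_matrix_avg_const sign_matrix_avg_add)

lemma sign_matrix_avg_prod_rows:
  "sign_matrix_avg m l (\<lambda>G. \<Prod>r<l. h (G r)) = sign_avg m h ^ l"
proof (induction l)
  case 0
  then show ?case by simp
next
  case (Suc l)
  have "sign_matrix_avg m (Suc l) (\<lambda>G. \<Prod>r<Suc l. h (G r))
      = sign_avg m (\<lambda>e. sign_matrix_avg m l (\<lambda>G. h e * (\<Prod>r<l. h (G r))))"
    by (simp add: mult.commute)
  also have "\<dots> = sign_avg m (\<lambda>e. sign_avg m h ^ l * h e)"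
    by (simp add: sign_matrix_avg_cmult Suc.IH mult.commute)
  also have "\<dots> = sign_avg m h ^ Suc l"
    by (simp only: sign_avg_cmult) (simp add: mult.commute)
  finally show ?case .
qed

definition dot :: "nat \<Rightarrow> (nat \<Rightarrow> real) \<Rightarrow> (nat \<Rightarrow> real) \<Rightarrow> real" where
  "dot m u v = (\<Sum>i<m. u i * v i)"

definition sqnorm :: "nat \<Rightarrow> (nat \<Rightarrow> real) \<Rightarrow> real" where
  "sqnorm m z = (\<Sum>i<m. (z i)\<^sup>2)"

lemma sqnorm_nonneg: "0 \<le> sqnorm m z"
  unfolding sqnorm_def by (intro sum_nonneg) auto

lemma dot_fun_upd_Suc: "dot (Suc m) (e(m := s)) z = dot m e z + s * z m"
proof -
  have "(\<Sum>i<m. (e(m := s)) i * z i) = dot m e z"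
    unfolding dot_def by (intro sum.cong) auto
  then show ?thesis by (simp add: dot_def)
qed

lemma dot_add_right: "dot m e (\<lambda>i. u i + v i) = dot m e u + dot m e v"
  by (simp add: dot_def algebra_simps sum.distrib)

lemma dot_diff_right: "dot m e (\<lambda>i. u i - v i) = dot m e u - dot m e v"
  by (simp add: dot_def algebra_simps sum_subtractf)

lemma sqnorm_add_minus_sqnorm_diff:
  "sqnorm m (\<lambda>i. u i + v i) - sqnorm m (\<lambda>i. u i - v i) = 4 * dot m u v"
  by (simp add: sqnorm_def dot_def power2_eq_square algebra_simps sum_subtractf sum.distrib
      sum_distrib_left)

lemma sqnorm_add_le: "sqnorm m (\<lambda>i. u i + v i) \<le> 2 * sqnorm m u + 2 * sqnorm m v"
proof -
  have "(u i + v i)\<^sup>2 \<le> 2 * (u i)\<^sup>2 + 2 * (v i)\<^sup>2" for i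
    using sum_squares_ge_zero[of "u i - v i" 0] by (simp add: power2_eq_square algebra_simps)
  then have "sqnorm m (\<lambda>i. u i + v i) \<le> (\<Sum>i<m. 2 * (u i)\<^sup>2 + 2 * (v i)\<^sup>2)"
    unfolding sqnorm_def by (rule sum_mono)
  also have "\<dots> = 2 * sqnorm m u + 2 * sqnorm m v"
    by (simp add: sqnorm_def sum.distrib sum_distrib_left)
  finally show ?thesis .
qed

lemma sqnorm_diff_le: "sqnorm m (\<lambda>i. u i - v i) \<le> 2 * sqnorm m u + 2 * sqnorm m v"
  using sqnorm_add_le[of m u "\<lambda>i. - v i"] by (simp add: sqnorm_def)

lemma sign_avg_exp_square_dot_le:
  "\<bar>t\<bar> * sqnorm m z \<le> 1/4 \<Longrightarrow>
   sign_avg m (\<lambda>e. exp (t * (dot m e z)\<^sup>2)) \<le> exp (t * sqnorm m z + 4 * t\<^sup>2 * (sqnorm m z)\<^sup>2)"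
proof (induction m arbitrary: t)
  case 0
  then show ?case by (simp add: dot_def sqnorm_def)
next
  case (Suc m)
  define s where "s = sqnorm m z"
  define a where "a = z m"
  define t' where "t' = t + 2 * a\<^sup>2 * t\<^sup>2"
  have sqnorm_Suc: "sqnorm (Suc m) z = s + a\<^sup>2"
    by (simp add: sqnorm_def s_def a_def)
  have s: "0 \<le> s"
    unfolding s_def by (rule sqnorm_nonneg)
  have small: "\<bar>t\<bar> * (s + a\<^sup>2) \<le> 1/4"
    using Suc.prems sqnorm_Suc by simp
  have "sign_avg (Suc m) (\<lambda>e. exp (t * (dot (Suc m) e z)\<^sup>2))
      = sign_avg m (\<lambda>e. (exp (t * (dot m e z + a)\<^sup>2) + exp (t * (dot m e z - a)\<^sup>2)) / 2)"
    using sign_avg_cmult[of m "1/2"] by (simp add: dot_fun_upd_Suc a_def sign_avg_add)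
  also have "\<dots> \<le> sign_avg m (\<lambda>e. exp (t * a\<^sup>2) * exp (t' * (dot m e z)\<^sup>2))"
    unfolding t'_def by (intro sign_avg_mono exp_square_shift_avg_le)
  also have "\<dots> = exp (t * a\<^sup>2) * sign_avg m (\<lambda>e. exp (t' * (dot m e z)\<^sup>2))"
    by (rule sign_avg_cmult)
  also have "\<dots> \<le> exp (t * a\<^sup>2) * exp (t' * s + 4 * t'\<^sup>2 * s\<^sup>2)"
    using Suc.IH[of t'] mgf_param_step_small[OF s _ small] by (simp add: s_def t'_def)
  also have "\<dots> \<le> exp (t * (s + a\<^sup>2) + 4 * t\<^sup>2 * (s + a\<^sup>2)\<^sup>2)"
    using mgf_exponent_step_le[OF s _ small] by (simp add: t'_def algebra_simps flip: exp_add)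
  finally show ?case
    by (simp add: sqnorm_Suc)
qed

lemma sign_matrix_avg_exp_sum_squares_le:
  assumes "\<bar>t\<bar> * sqnorm m z \<le> 1/4"
  shows "sign_matrix_avg m l (\<lambda>G. exp (t * (\<Sum>r<l. (dot m (G r) z)\<^sup>2) + c))
           \<le> exp (c + real l * (t * sqnorm m z + 4 * t\<^sup>2 * (sqnorm m z)\<^sup>2))"
proof -
  have "sign_matrix_avg m l (\<lambda>G. exp (t * (\<Sum>r<l. (dot m (G r) z)\<^sup>2) + c))
      = sign_matrix_avg m l (\<lambda>G. exp c * (\<Prod>r<l. exp (t * (dot m (G r) z)\<^sup>2)))"
    by (simp add: exp_add exp_sum sum_distrib_left mult.commute)
  also have "\<dots> = exp c * sign_avg m (\<lambda>e. exp (t * (dot m e z)\<^sup>2)) ^ l"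
    using sign_matrix_avg_prod_rows[of m l "\<lambda>e. exp (t * (dot m e z)\<^sup>2)"]
    by (simp add: sign_matrix_avg_cmult)
  also have "\<dots> \<le> exp c * exp (t * sqnorm m z + 4 * t\<^sup>2 * (sqnorm m z)\<^sup>2) ^ l"
    by (intro mult_left_mono power_mono sign_avg_exp_square_dot_le assms sign_avg_nonneg) auto
  also have "\<dots> = exp (c + real l * (t * sqnorm m z + 4 * t\<^sup>2 * (sqnorm m z)\<^sup>2))"
    by (simp add: exp_add exp_of_nat_mult)
  finally show ?thesis .
qed

section \<open>Random sign sketches\<close>

definition sketch_dev :: "nat \<Rightarrow> nat \<Rightarrow> (nat \<Rightarrow> nat \<Rightarrow> real) \<Rightarrow> (nat \<Rightarrow> real) \<Rightarrow> real" where
  "sketch_dev m l G z = (\<Sum>r<l. (dot m (G r) z)\<^sup>2) - real l * sqnorm m z"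

definition tail_weight :: "real \<Rightarrow> real \<Rightarrow> real \<Rightarrow> real" where
  "tail_weight t c D = exp (t * (D - c)) + exp (- t * (D + c))"

lemma tail_weight_nonneg: "0 \<le> tail_weight t c D"
  unfolding tail_weight_def by (intro add_nonneg_nonneg) auto

lemma tail_weight_ge_1:
  assumes "0 \<le> t" and "c \<le> \<bar>D\<bar>"
  shows "1 \<le> tail_weight t c D"
proof -
  have "0 \<le> t * (D - c) \<or> 0 \<le> - t * (D + c)"
    using assms by (cases "0 \<le> D") (auto intro: mult_nonneg_nonpos)
  then show ?thesis
    unfolding tail_weight_def by (smt (verit) exp_ge_zero one_le_exp_iff)
qed

lemma sign_matrix_avg_tail_weight_le:
  assumes S: "sqnorm m z \<le> B" and \<beta>: "0 < \<beta>" "\<beta> \<le> B"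
  shows "sign_matrix_avg m l (\<lambda>G. tail_weight (\<beta> / (8 * B\<^sup>2)) (real l * \<beta>) (sketch_dev m l G z))
           \<le> 2 * exp (- (real l * \<beta>\<^sup>2 / (16 * B\<^sup>2)))"
proof -
  define t where "t = \<beta> / (8 * B\<^sup>2)"
  define S where "S = sqnorm m z"
  have B: "0 < B" and S0: "0 \<le> S"
    using \<beta> sqnorm_nonneg by (auto simp: S_def)
  have "4 * t\<^sup>2 * S\<^sup>2 \<le> 4 * t\<^sup>2 * B\<^sup>2"
    using S S0 by (intro mult_left_mono power_mono) (auto simp: S_def)
  also have "\<dots> = t * \<beta> - \<beta>\<^sup>2 / (16 * B\<^sup>2)"
    using B by (simp add: t_def field_simps power2_eq_square)
  finally have "4 * t\<^sup>2 * S\<^sup>2 - t * \<beta> \<le> - (\<beta>\<^sup>2 / (16 * B\<^sup>2))"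
    by simp
  then have exponent: "real l * (4 * t\<^sup>2 * S\<^sup>2 - t * \<beta>) \<le> real l * - (\<beta>\<^sup>2 / (16 * B\<^sup>2))"
    by (rule mult_left_mono) simp
  have one_side: "sign_matrix_avg m l (\<lambda>G. exp (\<sigma> * sketch_dev m l G z - t * (real l * \<beta>)))
      \<le> exp (- (real l * \<beta>\<^sup>2 / (16 * B\<^sup>2)))" if \<sigma>: "\<bar>\<sigma>\<bar> = t" for \<sigma>
  proof -
    have "\<bar>\<sigma>\<bar> * S \<le> \<beta> / (8 * B)"
      using S \<beta> B by (simp add: \<sigma> t_def S_def power2_eq_square field_simps mult_left_mono)
    also have "\<dots> \<le> 1/4"
      using \<beta> B by (simp add: field_simps)
    finally have small: "\<bar>\<sigma>\<bar> * S \<le> 1/4" .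
    have "sign_matrix_avg m l (\<lambda>G. exp (\<sigma> * sketch_dev m l G z - t * (real l * \<beta>)))
        = sign_matrix_avg m l (\<lambda>G. exp (\<sigma> * (\<Sum>r<l. (dot m (G r) z)\<^sup>2)
                                         + (- \<sigma> * real l * S - t * real l * \<beta>)))"
      by (simp add: sketch_dev_def S_def algebra_simps)
    also have "\<dots> \<le> exp ((- \<sigma> * real l * S - t * real l * \<beta>) + real l * (\<sigma> * S + 4 * \<sigma>\<^sup>2 * S\<^sup>2))"
      using sign_matrix_avg_exp_sum_squares_le small by (simp add: S_def)
    also have "\<dots> = exp (real l * (4 * t\<^sup>2 * S\<^sup>2 - t * \<beta>))"
      using power2_abs[of \<sigma>] by (simp add: \<sigma> algebra_simps)
    also have "\<dots> \<le> exp (- (real l * \<beta>\<^sup>2 / (16 * B\<^sup>2)))"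
      using exponent by simp
    finally show ?thesis .
  qed
  have "tail_weight t (real l * \<beta>) D = exp (t * D - t * (real l * \<beta>)) + exp ((- t) * D - t * (real l * \<beta>))"
    for D
    by (simp add: tail_weight_def algebra_simps)
  then show ?thesis
    using one_side[of t] one_side[of "-t"] \<beta> by (simp add: t_def sign_matrix_avg_add)
qed

lemma exists_sketch_preserving_sqnorms:
  assumes Z: "finite Z" "\<forall>z\<in>Z. sqnorm m z \<le> B" and \<beta>: "0 < \<beta>" "\<beta> \<le> B"
    and union_bound: "real (card Z) * (2 * exp (- (real l * \<beta>\<^sup>2 / (16 * B\<^sup>2)))) < 1"
  shows "\<exists>G. \<forall>z\<in>Z. \<bar>sketch_dev m l G z\<bar> < real l * \<beta>"
proof (rule ccontr)
  assume "\<not> ?thesis"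
  then have bad: "\<exists>z\<in>Z. real l * \<beta> \<le> \<bar>sketch_dev m l G z\<bar>" for G
    by (auto simp: not_less)
  define w where "w z G = tail_weight (\<beta> / (8 * B\<^sup>2)) (real l * \<beta>) (sketch_dev m l G z)" for z G
  have "1 \<le> (\<Sum>z\<in>Z. w z G)" for G
  proof -
    obtain z where "z \<in> Z" "real l * \<beta> \<le> \<bar>sketch_dev m l G z\<bar>"
      using bad by blast
    then have "1 \<le> w z G"
      using \<beta> unfolding w_def by (intro tail_weight_ge_1) auto
    also have "\<dots> \<le> (\<Sum>z\<in>Z. w z G)"
      using \<open>z \<in> Z\<close> Z(1) unfolding w_def by (intro member_le_sum tail_weight_nonneg)
    finally show ?thesis .
  qed
  then have "1 \<le> sign_matrix_avg m l (\<lambda>G. \<Sum>z\<in>Z. w z G)"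
    using sign_matrix_avg_mono[of "\<lambda>_. 1"] by (metis sign_matrix_avg_const)
  also have "\<dots> = (\<Sum>z\<in>Z. sign_matrix_avg m l (w z))"
    using Z(1) by (rule sign_matrix_avg_sum)
  also have "\<dots> \<le> (\<Sum>z\<in>Z. 2 * exp (- (real l * \<beta>\<^sup>2 / (16 * B\<^sup>2))))"
    using Z(2) \<beta> unfolding w_def by (intro sum_mono sign_matrix_avg_tail_weight_le) auto
  also have "\<dots> < 1"
    using union_bound by simp
  finally show False
    by simp
qed

section \<open>Factorization norms\<close>

lemma sqnorm_col_le_col_norm:
  assumes "j < k"
  shows "sqnorm m (\<lambda>i. L i j) \<le> (col_norm m k L)\<^sup>2"
proof -
  have "sqrt (sqnorm m (\<lambda>i. L i j)) \<le> col_norm m k L"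
    unfolding col_norm_def sqnorm_def using assms by (intro Max_ge) auto
  then have "(sqrt (sqnorm m (\<lambda>i. L i j)))\<^sup>2 \<le> (col_norm m k L)\<^sup>2"
    by (intro power_mono) (auto simp: sqnorm_nonneg)
  then show ?thesis
    using sqnorm_nonneg by simp
qed

lemma col_norm_nonneg: "0 < k \<Longrightarrow> 0 \<le> col_norm m k L"
  unfolding col_norm_def by (subst Max_ge_iff) (auto intro!: bexI[of _ 0] sum_nonneg)

lemma col_norm_le_sqrt:
  "0 < k \<Longrightarrow> (\<And>j. j < k \<Longrightarrow> sqnorm m (\<lambda>i. L i j) \<le> c) \<Longrightarrow> col_norm m k L \<le> sqrt c"
  unfolding col_norm_def sqnorm_def by (subst Max_le_iff) auto

lemma factors_identity: "factors k k (\<lambda>i j. if i = j then 1 else 0) W W"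
  unfolding factors_def
proof (intro allI impI)
  fix j j' assume "j < k"
  have "(\<Sum>i<k. (if i = j then 1 else 0) * W i j') = (\<Sum>i<k. if i = j then W i j' else 0)"
    by (intro sum.cong) auto
  then show "(\<Sum>i<k. (if i = j then 1 else 0) * W i j') = W j j'"
    using \<open>j < k\<close> by simp
qed

lemma bdd_below_factorization_costs:
  "0 < k \<Longrightarrow> bdd_below {col_norm m k L * col_norm m k R | m L R. factors m k L R W}"
  by (rule bdd_belowI[of _ 0]) (auto intro!: mult_nonneg_nonneg col_norm_nonneg)

lemma gamma2_le_col_norm_mult:
  "0 < k \<Longrightarrow> factors m k L R W \<Longrightarrow> gamma2 k W \<le> col_norm m k L * col_norm m k R"
  unfolding gamma2_def by (rule cInf_lower) (auto intro: bdd_below_factorization_costs)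

lemma exists_factors_col_norm_mult_less:
  assumes "0 < k" "gamma2 k W < c"
  shows "\<exists>m L R. factors m k L R W \<and> col_norm m k L * col_norm m k R < c"
proof -
  have "{col_norm m k L * col_norm m k R | m L R. factors m k L R W} \<noteq> {}"
    using factors_identity by blast
  from cInf_less_iff[OF this bdd_below_factorization_costs[OF assms(1)]] assms(2)
  show ?thesis
    unfolding gamma2_def by blast
qed

lemma exists_balanced_factors:
  assumes fac: "factors m k L R W" and a: "0 < col_norm m k L" and b: "0 < col_norm m k R"
  shows "\<exists>x y. (\<forall>j<k. sqnorm m (x j) \<le> col_norm m k L * col_norm m k R
                    \<and> sqnorm m (y j) \<le> col_norm m k L * col_norm m k R)
             \<and> (\<forall>j<k. \<forall>j'<k. dot m (x j) (y j') = W j j')"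
proof (intro exI conjI allI impI)
  define c where "c = sqrt (col_norm m k R / col_norm m k L)"
  have c: "0 < c" "c\<^sup>2 = col_norm m k R / col_norm m k L"
    using a b by (simp_all add: c_def)
  fix j assume j: "j < k"
  have "sqnorm m (\<lambda>i. c * L i j) = c\<^sup>2 * sqnorm m (\<lambda>i. L i j)"
    by (simp add: sqnorm_def power_mult_distrib sum_distrib_left)
  also have "\<dots> \<le> c\<^sup>2 * (col_norm m k L)\<^sup>2"
    using sqnorm_col_le_col_norm[OF j] by (intro mult_left_mono) auto
  also have "\<dots> = col_norm m k L * col_norm m k R"
    using a unfolding c(2) by (simp add: power2_eq_square)
  finally show "sqnorm m (\<lambda>i. c * L i j) \<le> col_norm m k L * col_norm m k R" .
  have "sqnorm m (\<lambda>i. R i j / c) = sqnorm m (\<lambda>i. R i j) / c\<^sup>2"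
    by (simp add: sqnorm_def power_divide sum_divide_distrib)
  also have "\<dots> \<le> (col_norm m k R)\<^sup>2 / c\<^sup>2"
    using sqnorm_col_le_col_norm[OF j] by (intro divide_right_mono) auto
  also have "\<dots> = col_norm m k L * col_norm m k R"
    using b unfolding c(2) by (simp add: power2_eq_square)
  finally show "sqnorm m (\<lambda>i. R i j / c) \<le> col_norm m k L * col_norm m k R" .
  fix j' assume "j' < k"
  have "dot m (\<lambda>i. c * L i j) (\<lambda>i. R i j' / c) = (\<Sum>i<m. L i j * R i j')"
    unfolding dot_def using c(1) by (intro sum.cong) auto
  then show "dot m (\<lambda>i. c * L i j) (\<lambda>i. R i j' / c) = W j j'"
    using fac j \<open>j' < k\<close> by (simp add: factors_def)
qed

lemma exists_balanced_near_optimal_factors: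
  assumes k: "0 < k" and \<gamma>: "0 < gamma2 k W" "gamma2 k W < c"
  shows "\<exists>m x y. (\<forall>j<k. sqnorm m (x j) \<le> c \<and> sqnorm m (y j) \<le> c)
                 \<and> (\<forall>j<k. \<forall>j'<k. dot m (x j) (y j') = W j j')"
proof -
  obtain m L R where fac: "factors m k L R W" and lt: "col_norm m k L * col_norm m k R < c"
    using exists_factors_col_norm_mult_less[OF k \<gamma>(2)] by blast
  have "0 < col_norm m k L * col_norm m k R"
    using gamma2_le_col_norm_mult[OF k fac] \<gamma>(1) by linarith
  then have "0 < col_norm m k L" "0 < col_norm m k R"
    using col_norm_nonneg[OF k, of m L] col_norm_nonneg[OF k, of m R]
    by (auto simp: zero_less_mult_iff)
  then obtain x y where
      xy: "\<forall>j<k. sqnorm m (x j) \<le> col_norm m k L * col_norm m k R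
                \<and> sqnorm m (y j) \<le> col_norm m k L * col_norm m k R"
      and W: "\<forall>j<k. \<forall>j'<k. dot m (x j) (y j') = W j j'"
    using exists_balanced_factors[OF fac] by blast
  have "\<forall>j<k. sqnorm m (x j) \<le> c \<and> sqnorm m (y j) \<le> c"
    using xy less_imp_le[OF lt] by (blast intro: order_trans)
  with W show ?thesis
    by blast
qed

section \<open>Sketching a factorization\<close>

definition polarization_vectors ::
    "nat \<Rightarrow> (nat \<Rightarrow> nat \<Rightarrow> real) \<Rightarrow> (nat \<Rightarrow> nat \<Rightarrow> real) \<Rightarrow> (nat \<Rightarrow> real) set" where
  "polarization_vectors k x y =
     x ` {..<k} \<union> y ` {..<k}
     \<union> (\<lambda>(j, j') i. x j i + y j' i) ` ({..<k} \<times> {..<k})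
     \<union> (\<lambda>(j, j') i. x j i - y j' i) ` ({..<k} \<times> {..<k})"

lemma finite_polarization_vectors: "finite (polarization_vectors k x y)"
  by (simp add: polarization_vectors_def)

lemma card_polarization_vectors_le: "card (polarization_vectors k x y) \<le> 4 * k\<^sup>2"
proof -
  have "card (polarization_vectors k x y)
      \<le> card (x ` {..<k}) + card (y ` {..<k})
        + card ((\<lambda>(j, j') i. x j i + y j' i) ` ({..<k} \<times> {..<k}))
        + card ((\<lambda>(j, j') i. x j i - y j' i) ` ({..<k} \<times> {..<k}))"
    unfolding polarization_vectors_def
    by (intro card_Un_le[THEN order_trans] add_mono order.refl)
  also have "\<dots> \<le> k * k + k * k + k * k + k * k"
    by (intro add_mono card_image_le[THEN order_trans]) (simp_all add: card_cartesian_product)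
  finally show ?thesis
    by (simp add: power2_eq_square)
qed

lemma sqnorm_polarization_vectors_le:
  assumes "\<forall>j<k. sqnorm m (x j) \<le> s \<and> sqnorm m (y j) \<le> s" and "z \<in> polarization_vectors k x y"
  shows "sqnorm m z \<le> 4 * s"
proof -
  have x: "sqnorm m (x j) \<le> s" and y: "sqnorm m (y j) \<le> s" if "j < k" for j
    using assms(1) that by auto
  from assms(2) consider
      j where "j < k" "z = x j" | j where "j < k" "z = y j"
    | j j' where "j < k" "j' < k" "z = (\<lambda>i. x j i + y j' i)"
    | j j' where "j < k" "j' < k" "z = (\<lambda>i. x j i - y j' i)"
    unfolding polarization_vectors_def by auto
  then show ?thesis
  proof cases
    case (1 j)
    then show ?thesis using x[of j] sqnorm_nonneg[of m z] by simp
  next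
    case (2 j)
    then show ?thesis using y[of j] sqnorm_nonneg[of m z] by simp
  next
    case (3 j j')
    then show ?thesis using x[of j] y[of j'] sqnorm_add_le[of m "x j" "y j'"] by simp
  next
    case (4 j j')
    then show ?thesis using x[of j] y[of j'] sqnorm_diff_le[of m "x j" "y j'"] by simp
  qed
qed

lemma sketch_dev_polarization:
  "(\<Sum>r<l. dot m (G r) u * dot m (G r) v) - real l * dot m u v
     = (sketch_dev m l G (\<lambda>i. u i + v i) - sketch_dev m l G (\<lambda>i. u i - v i)) / 4"
proof -
  have "4 * (dot m (G r) u * dot m (G r) v)
      = (dot m (G r) (\<lambda>i. u i + v i))\<^sup>2 - (dot m (G r) (\<lambda>i. u i - v i))\<^sup>2" for r
    by (simp add: dot_add_right dot_diff_right power2_eq_square algebra_simps)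
  then have "4 * (\<Sum>r<l. dot m (G r) u * dot m (G r) v)
      = (\<Sum>r<l. (dot m (G r) (\<lambda>i. u i + v i))\<^sup>2) - (\<Sum>r<l. (dot m (G r) (\<lambda>i. u i - v i))\<^sup>2)"
    by (simp add: sum_distrib_left sum_subtractf)
  moreover have "real l * sqnorm m (\<lambda>i. u i + v i) - real l * sqnorm m (\<lambda>i. u i - v i)
      = 4 * (real l * dot m u v)"
    by (simp flip: right_diff_distrib add: sqnorm_add_minus_sqnorm_diff)
  ultimately show ?thesis
    unfolding sketch_dev_def by argo
qed

lemma sqnorm_normalized_sketch_le:
  assumes l: "0 < l" and "sqnorm m z \<le> s" and "sketch_dev m l G z < real l * \<beta>"
  shows "sqnorm l (\<lambda>r. dot m (G r) z / sqrt (real l)) \<le> s + \<beta>"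
proof -
  have "sqnorm l (\<lambda>r. dot m (G r) z / sqrt (real l)) = sqnorm m z + sketch_dev m l G z / real l"
    using l by (simp add: sqnorm_def sketch_dev_def power_divide field_simps flip: sum_divide_distrib)
  moreover have "sketch_dev m l G z / real l < \<beta>"
    using assms(3) l by (simp add: pos_divide_less_eq mult.commute)
  ultimately show ?thesis
    using assms(2) by simp
qed

lemma abs_normalized_sketch_dot_diff_lt:
  assumes l: "0 < l"
    and "\<bar>sketch_dev m l G (\<lambda>i. u i + v i)\<bar> < real l * \<beta>"
    and "\<bar>sketch_dev m l G (\<lambda>i. u i - v i)\<bar> < real l * \<beta>"
  shows "\<bar>(\<Sum>r<l. dot m (G r) u / sqrt (real l) * (dot m (G r) v / sqrt (real l))) - dot m u v\<bar>
           < \<beta> / 2"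
proof -
  have "(\<Sum>r<l. dot m (G r) u / sqrt (real l) * (dot m (G r) v / sqrt (real l))) - dot m u v
      = ((\<Sum>r<l. dot m (G r) u * dot m (G r) v) - real l * dot m u v) / real l"
    using l by (simp add: sum_divide_distrib field_simps)
  also have "\<dots> = (sketch_dev m l G (\<lambda>i. u i + v i) - sketch_dev m l G (\<lambda>i. u i - v i))
                   / (4 * real l)"
    by (simp add: sketch_dev_polarization)
  finally have "\<bar>(\<Sum>r<l. dot m (G r) u / sqrt (real l) * (dot m (G r) v / sqrt (real l))) - dot m u v\<bar>
        * (4 * real l)
      = \<bar>sketch_dev m l G (\<lambda>i. u i + v i) - sketch_dev m l G (\<lambda>i. u i - v i)\<bar>"
    using l by (simp add: abs_divide)
  also have "\<dots> < 2 * (real l * \<beta>)"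
    using assms(2,3) abs_triangle_ineq4[of "sketch_dev m l G (\<lambda>i. u i + v i)"
        "sketch_dev m l G (\<lambda>i. u i - v i)"] by linarith
  finally show ?thesis
    using l by (simp add: field_simps)
qed

lemma gamma2_dim_approx_le_of_sketch:
  assumes k: "0 < k" and l: "0 < l"
    and xy: "\<forall>j<k. sqnorm m (x j) \<le> s \<and> sqnorm m (y j) \<le> s"
    and W: "\<forall>j<k. \<forall>j'<k. dot m (x j) (y j') = W j j'"
    and G: "\<forall>z\<in>polarization_vectors k x y. \<bar>sketch_dev m l G z\<bar> < real l * \<beta>"
  shows "gamma2_dim_approx l k W (\<beta> / 2) \<le> ereal (s + \<beta>)"
proof -
  define L' where "L' r j = dot m (G r) (x j) / sqrt (real l)" for r j
  define R' where "R' r j = dot m (G r) (y j) / sqrt (real l)" for r j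
  have G_x: "\<bar>sketch_dev m l G (x j)\<bar> < real l * \<beta>"
    and G_y: "\<bar>sketch_dev m l G (y j)\<bar> < real l * \<beta>"
    and G_add: "\<bar>sketch_dev m l G (\<lambda>i. x j i + y j' i)\<bar> < real l * \<beta>"
    and G_diff: "\<bar>sketch_dev m l G (\<lambda>i. x j i - y j' i)\<bar> < real l * \<beta>"
    if "j < k" "j' < k" for j j'
    using G that unfolding polarization_vectors_def by auto
  have col_L': "sqnorm l (\<lambda>r. L' r j) \<le> s + \<beta>" and col_R': "sqnorm l (\<lambda>r. R' r j) \<le> s + \<beta>"
    if "j < k" for j
    unfolding L'_def R'_def using xy G_x[OF that that] G_y[OF that that] that
    by (auto intro!: sqnorm_normalized_sketch_le[OF l] simp: abs_less_iff)
  have s\<beta>: "0 \<le> s + \<beta>"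
    using order_trans[OF sqnorm_nonneg col_L'[OF k]] .
  have "gamma2_dim_approx l k W (\<beta> / 2) \<le> gamma2_dim l k (\<lambda>j j'. \<Sum>r<l. L' r j * R' r j')"
    unfolding gamma2_dim_approx_def L'_def R'_def
    using abs_normalized_sketch_dot_diff_lt[OF l G_add G_diff] W
    by (intro Inf_lower) (auto intro: less_imp_le)
  also have "\<dots> \<le> ereal (col_norm l k L' * col_norm l k R')"
    unfolding gamma2_dim_def by (intro Inf_lower) (auto simp: factors_def)
  also have "\<dots> \<le> ereal (sqrt (s + \<beta>) * sqrt (s + \<beta>))"
    using k col_L' col_R' s\<beta>
    by (simp add: mult_mono col_norm_nonneg col_norm_le_sqrt del: real_sqrt_mult_self)
  also have "\<dots> = ereal (s + \<beta>)"
    using s\<beta> by simp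
  finally show ?thesis .
qed

lemma polynomial_mult_exp_neg_lt_1:
  fixes k :: nat
  assumes k: "2 \<le> k" and x: "5 * ln (real k) < x"
  shows "8 * (real k)\<^sup>2 * exp (- x) < 1"
proof -
  have "exp (- x) < exp (- (5 * ln (real k)))"
    using x by simp
  also have "\<dots> = 1 / real k ^ 5"
  proof -
    have "5 * ln (real k) = ln (real k ^ 5)"
      using k by (simp add: ln_realpow)
    then show ?thesis
      using k by (simp add: exp_minus inverse_eq_divide)
  qed
  finally have "8 * (real k)\<^sup>2 * exp (- x) < 8 * (real k)\<^sup>2 / real k ^ 5"
    using k by (simp add: divide_simps)
  also have "\<dots> \<le> 1"
  proof -
    have "2 ^ 3 \<le> real k ^ 3"
      using k by (intro power_mono) auto
    then have "8 * (real k)\<^sup>2 \<le> real k ^ 3 * (real k)\<^sup>2"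
      by (intro mult_right_mono) auto
    then show ?thesis
      using k by (simp flip: power_add)
  qed
  finally show ?thesis .
qed

lemma exists_sketch_dim:
  fixes k :: nat and \<alpha> \<gamma> :: real
  assumes k: "2 \<le> k" and \<alpha>: "0 < \<alpha>" "\<alpha> \<le> \<gamma>"
  shows "\<exists>l>0. real l \<le> (1280 + 1 / ln 2) * \<gamma>\<^sup>2 * ln (real k) / \<alpha>\<^sup>2
               \<and> 8 * (real k)\<^sup>2 * exp (- (real l * \<alpha>\<^sup>2 / (256 * \<gamma>\<^sup>2))) < 1"
proof (intro exI conjI)
  define X where "X = \<gamma>\<^sup>2 / \<alpha>\<^sup>2 * ln (real k)"
  \<comment> \<open>\<open>1280 = 5 * 256\<close> makes the exponent in the union bound exceed \<open>5 ln k\<close>.\<close>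
  define l where "l = nat \<lfloor>1280 * X\<rfloor> + 1"
  have "\<alpha>\<^sup>2 \<le> \<gamma>\<^sup>2"
    using \<alpha> by (intro power_mono) auto
  then have "1 \<le> \<gamma>\<^sup>2 / \<alpha>\<^sup>2"
    using \<alpha> by simp
  moreover have ln_k: "ln 2 \<le> ln (real k)"
    using k by simp
  ultimately have "1 * ln (real k) \<le> X"
    unfolding X_def using k by (intro mult_right_mono) auto
  then have "ln 2 \<le> X"
    using ln_k by simp
  moreover have "0 < ln (2 :: real)"
    by simp
  ultimately have X: "0 < X" "1 \<le> X / ln 2"
    by (linarith, simp)
  have l: "1280 * X < real l" "real l \<le> 1280 * X + 1"
    using X real_of_int_floor_add_one_gt[of "1280 * X"] by (simp_all add: l_def of_nat_nat) linarith
  show "0 < l"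
    by (simp add: l_def)
  have "real l \<le> 1280 * X + X / ln 2"
    using l X by linarith
  also have "\<dots> = (1280 + 1 / ln 2) * \<gamma>\<^sup>2 * ln (real k) / \<alpha>\<^sup>2"
    using \<alpha> ln_gt_zero[of "2 :: real"] by (simp add: X_def field_simps)
  finally show "real l \<le> (1280 + 1 / ln 2) * \<gamma>\<^sup>2 * ln (real k) / \<alpha>\<^sup>2" .
  have "5 * ln (real k) = 1280 * X * \<alpha>\<^sup>2 / (256 * \<gamma>\<^sup>2)"
    using \<alpha> by (simp add: X_def field_simps)
  also have "\<dots> < real l * \<alpha>\<^sup>2 / (256 * \<gamma>\<^sup>2)"
    using l \<alpha> by (intro divide_strict_right_mono mult_strict_right_mono) auto
  finally show "8 * (real k)\<^sup>2 * exp (- (real l * \<alpha>\<^sup>2 / (256 * \<gamma>\<^sup>2))) < 1"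
    by (rule polynomial_mult_exp_neg_lt_1[OF k])
qed

lemma exists_dim_gamma2_dim_approx_le:
  assumes k: "2 \<le> k" and \<alpha>: "0 < \<alpha>" "\<alpha> < gamma2 k W"
  shows "\<exists>l. real l \<le> (1280 + 1 / ln 2) * (gamma2 k W)\<^sup>2 * ln (real k) / \<alpha>\<^sup>2
             \<and> gamma2_dim_approx l k W \<alpha> \<le> ereal (4 * gamma2 k W)"
proof -
  define \<gamma> where "\<gamma> = gamma2 k W"
  obtain m x y where xy: "\<forall>j<k. sqnorm m (x j) \<le> 2 * \<gamma> \<and> sqnorm m (y j) \<le> 2 * \<gamma>"
    and W: "\<forall>j<k. \<forall>j'<k. dot m (x j) (y j') = W j j'"
    using exists_balanced_near_optimal_factors[of k W "2 * \<gamma>"] k \<alpha> by (auto simp: \<gamma>_def)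
  obtain l where l: "0 < l" "real l \<le> (1280 + 1 / ln 2) * \<gamma>\<^sup>2 * ln (real k) / \<alpha>\<^sup>2"
    and union_bound: "8 * (real k)\<^sup>2 * exp (- (real l * \<alpha>\<^sup>2 / (256 * \<gamma>\<^sup>2))) < 1"
    using exists_sketch_dim[OF k \<alpha>(1), of \<gamma>] \<alpha> by (auto simp: \<gamma>_def)
  let ?Z = "polarization_vectors k x y"
  have "real (card ?Z) \<le> 4 * (real k)\<^sup>2"
    using of_nat_mono[OF card_polarization_vectors_le[of k x y]] by simp
  then have "real (card ?Z) * (2 * exp (- (real l * \<alpha>\<^sup>2 / (256 * \<gamma>\<^sup>2))))
      \<le> 4 * (real k)\<^sup>2 * (2 * exp (- (real l * \<alpha>\<^sup>2 / (256 * \<gamma>\<^sup>2))))"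
    by (rule mult_right_mono) simp
  also have "\<dots> < 1"
    using union_bound by simp
  finally have "real (card ?Z) * (2 * exp (- (real l * (2 * \<alpha>)\<^sup>2 / (16 * (8 * \<gamma>)\<^sup>2)))) < 1"
    by (simp add: power_mult_distrib)
  then obtain G where "\<forall>z\<in>?Z. \<bar>sketch_dev m l G z\<bar> < real l * (2 * \<alpha>)"
    using exists_sketch_preserving_sqnorms[of ?Z m "8 * \<gamma>" "2 * \<alpha>" l] \<alpha>
      finite_polarization_vectors sqnorm_polarization_vectors_le[OF xy] by (auto simp: \<gamma>_def)
  then have "gamma2_dim_approx l k W \<alpha> \<le> ereal (2 * \<gamma> + 2 * \<alpha>)"
    using gamma2_dim_approx_le_of_sketch[OF _ l(1) xy W] k by fastforce
  also have "\<dots> \<le> ereal (4 * gamma2 k W)"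
    using \<alpha> by (simp add: \<gamma>_def)
  finally show ?thesis
    using l by (auto simp: \<gamma>_def)
qed

theorem mainTheorem6:
  shows "\<exists>C1 > 0. \<exists>C2 > 0. \<forall>(k::nat) (W::nat \<Rightarrow> nat \<Rightarrow> real) (\<alpha>::real).
           k \<ge> 2 \<and> 0 < \<alpha> \<and> \<alpha> < gamma2 k W \<longrightarrow>
           (\<exists>l::nat. real l \<le> C1 * (gamma2 k W)\<^sup>2 * ln (real k) / \<alpha>\<^sup>2 \<and>
                     gamma2_dim_approx l k W \<alpha> \<le> ereal (C2 * gamma2 k W))"
proof -
  have "0 < 1280 + 1 / ln (2 :: real)" and "0 < (4 :: real)"
    by (simp_all add: add_pos_pos)
  then show ?thesis
    using exists_dim_gamma2_dim_approx_le by blast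
qed

end
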